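(* Let $\delta=\delta_1^{x_1}\cdots\delta_n^{x_n}$ with distinct primes $\delta_i$, and let $f$ be a function on $2\times2$ rational matrices. Writing elements of $\mathbb{M}_\delta$ as $A=\begin{pmatrix} n_1&l_1\\ n_2&\tfrac1\delta l_2\end{pmatrix}$, it holds, at least as a formal sum, $$\sum_{\substack{A\in\mathbb{M}_\delta,\ A\neq0,\ \det A=0\\ \delta_1\nmid l_2\,\wedge\dots\wedge\,\delta_n\nmid l_2}}f(A)=\frac12\sum_{l=0}^{n}(-1)^l\sum_{\delta^{(l)}\in\mathcal{C}_l(\delta)}\ \sum_{\substack{j,p\in\mathbb{Z}\\ (j,p)\neq(0,0)}}\ \sum_{P\in\Gamma_0(\delta)/\langle T\rangle}f\left(\begin{pmatrix}0&j\\0&\frac{\delta^{(l)}}{\delta}p\end{pmatrix}\cdot P\right).$$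
   Context: $\mathbb{M}_\delta=\{\begin{pmatrix} n_1&l_1\\ n_2&\tfrac1\delta l_2\end{pmatrix}: n_1,n_2,l_1,l_2\in\mathbb{Z}\}$. $\Gamma_0(\delta)=\{\begin{pmatrix}a&b\\ \delta c&d\end{pmatrix}\in\mathrm{SL}(2,\mathbb{Z})\}$, $T=\begin{pmatrix}1&1\\0&1\end{pmatrix}$, and $\Gamma_0(\delta)/\langle T\rangle$ is the set of classes of $\Gamma_0(\delta)$ under $P_1\sim P_2\iff P_1=T^mP_2$ for some $m\in\mathbb{Z}$ (the sum runs over one representative per class). $\mathcal{C}_l(\delta)$ is the set of all products of $l$ distinct prime factors of $\delta$, with $\mathcal{C}_0(\delta)=\{1\}$. *)

theory Defs
  imports "HOL-Analysis.Analysis"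
begin

text \<open>2x2 rational matrices are modelled as \<open>rat^2^2\<close>; rows/columns indexed by 1 and 2.\<close>

definition mat2 :: "'a \<Rightarrow> 'a \<Rightarrow> 'a \<Rightarrow> 'a \<Rightarrow> 'a^2^2" where
  "mat2 a b c d = (\<chi> i j. if i = 1 then (if j = 1 then a else b) else (if j = 1 then c else d))"

definition Mdelta :: "nat \<Rightarrow> (rat^2^2) set" where
  "Mdelta \<delta> = {mat2 (of_int n1) (of_int l1) (of_int n2) (of_int l2 / of_nat \<delta>) | n1 l1 n2 l2. True}"

definition Gamma0 :: "nat \<Rightarrow> (rat^2^2) set" where
  "Gamma0 \<delta> = {mat2 (of_int a) (of_int b) (of_int (int \<delta> * c)) (of_int d) | a b c d.
                 a * d - b * (int \<delta> * c) = 1}"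

definition Tpow :: "int \<Rightarrow> rat^2^2" where
  "Tpow m = mat2 1 (of_int m) 0 1"

definition Trel :: "nat \<Rightarrow> ((rat^2^2) \<times> (rat^2^2)) set" where
  "Trel \<delta> = {(P1, P2). P1 \<in> Gamma0 \<delta> \<and> P2 \<in> Gamma0 \<delta> \<and> (\<exists>m. P1 = Tpow m ** P2)}"

definition Gamma0_mod_T :: "nat \<Rightarrow> (rat^2^2) set set" where
  "Gamma0_mod_T \<delta> = Gamma0 \<delta> // Trel \<delta>"

definition Cl :: "nat \<Rightarrow> nat \<Rightarrow> nat set" where
  "Cl l \<delta> = {\<Prod>S | S. S \<subseteq> prime_factors \<delta> \<and> card S = l}"

end

theory Submission
  imports Defs "HOL-Computational_Algebra.Primes"
begin

text \<open>A nonzero singular matrix of \<open>M\<^sub>\<delta>\<close> factors as a column \<open>(j, s/\<delta>)\<close> times a row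
  \<open>(C, e)\<close> with \<open>\<delta> | C\<close> and \<open>gcd C e = 1\<close>, uniquely up to a common sign; these rows are exactly
  the bottom rows of \<open>\<Gamma>\<^sub>0(\<delta>)\<close>, which classify \<open>\<Gamma>\<^sub>0(\<delta>)/\<langle>T\<rangle>\<close>. Hence the summand
  indexed by \<open>d\<close> on the right counts every such matrix with \<open>d | s\<close> exactly twice. Since \<open>e\<close> is
  prime to \<open>\<delta>\<close>, the condition on \<open>\<delta> a\<^sub>2\<^sub>2 = s e\<close> says that no prime factor of \<open>\<delta>\<close>
  divides \<open>s\<close>, and inclusion-exclusion over the squarefree divisors \<open>d\<close> of \<open>\<delta>\<close> turns the
  alternating sum into twice its indicator.\<close>

section \<open>Explicit 2x2 matrices\<close>

lemma mat2_nth [simp]: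
  "mat2 a b c d $ 1 $ 1 = a" "mat2 a b c d $ 1 $ 2 = b"
  "mat2 a b c d $ 2 $ 1 = c" "mat2 a b c d $ 2 $ 2 = d"
  by (simp_all add: mat2_def)

lemma mat2_cases: "A = mat2 (A$1$1) (A$1$2) (A$2$1) (A$2$2)"
  by (simp add: mat2_def vec_eq_iff forall_2)

lemma mat2_eq_iff: "mat2 a b c d = mat2 a' b' c' d' \<longleftrightarrow> a = a' \<and> b = b' \<and> c = c' \<and> d = d'"
  by (metis mat2_nth)

lemma mat2_eq_0_iff: "mat2 a b c d = 0 \<longleftrightarrow> a = 0 \<and> b = 0 \<and> c = 0 \<and> d = 0"
  by (metis mat2_cases mat2_nth zero_index)

lemma mat2_mult:
  "mat2 a b c d ** mat2 a' b' c' d' =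
     mat2 (a * a' + b * c') (a * b' + b * d') (c * a' + d * c') (c * b' + d * d')"
  by (simp add: vec_eq_iff forall_2 matrix_matrix_mult_def sum_2 mat2_def)

lemma det_mat2: "det (mat2 a b c d) = a * d - b * (c :: 'a :: comm_ring_1)"
  by (simp add: det_2)

lemma mat2_mult_right:
  "mat2 a b c d ** P = mat2 (a * P$1$1 + b * P$2$1) (a * P$1$2 + b * P$2$2)
                            (c * P$1$1 + d * P$2$1) (c * P$1$2 + d * P$2$2)"
  by (subst (1) mat2_cases[of P]) (simp only: mat2_mult)

lemma Tpow_mult:
  "Tpow m ** P = mat2 (P$1$1 + of_int m * P$2$1) (P$1$2 + of_int m * P$2$2) (P$2$1) (P$2$2)"
  by (simp add: Tpow_def mat2_mult_right)

section \<open>\<open>\<Gamma>\<^sub>0(\<delta>)\<close> modulo \<open>T\<close>\<close>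

lemma SL2_same_bottom_row:
  fixes a b a' b' c d :: int
  assumes "a * d - b * c = 1" "a' * d - b' * c = 1"
  shows "a' = a + (a * b' - a' * b) * c" "b' = b + (a * b' - a' * b) * d"
  using assms by algebra+

definition Gamma0_bottom_rows :: "nat \<Rightarrow> (int \<times> int) set" where
  "Gamma0_bottom_rows \<delta> = {(C, e). int \<delta> dvd C \<and> coprime C e}"

definition Gamma0_row_class :: "nat \<Rightarrow> int \<times> int \<Rightarrow> (rat^2^2) set" where
  "Gamma0_row_class \<delta> v = {P \<in> Gamma0 \<delta>. P$2$1 = of_int (fst v) \<and> P$2$2 = of_int (snd v)}"

lemma Gamma0_bottom_rows_uminus: "(C, e) \<in> Gamma0_bottom_rows \<delta> \<Longrightarrow> (-C, -e) \<in> Gamma0_bottom_rows \<delta>"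
  by (simp add: Gamma0_bottom_rows_def)

lemma Gamma0_iff:
  "P \<in> Gamma0 \<delta> \<longleftrightarrow> (\<exists>a b c d. P = mat2 (of_int a) (of_int b) (of_int (int \<delta> * c)) (of_int d) \<and>
                                 a * d - b * (int \<delta> * c) = 1)"
  unfolding Gamma0_def by blast

lemma Gamma0_row_classE:
  assumes "P \<in> Gamma0 \<delta>"
  obtains v where "v \<in> Gamma0_bottom_rows \<delta>" "P \<in> Gamma0_row_class \<delta> v"
proof -
  obtain a b c d where P: "P = mat2 (of_int a) (of_int b) (of_int (int \<delta> * c)) (of_int d)"
    and det: "a * d - b * (int \<delta> * c) = 1"
    using assms Gamma0_iff by blast
  have "coprime (int \<delta> * c) d"
    by (rule coprimeI) (metis det dvd_diff dvd_mult mult.commute)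
  then show thesis
    using that[of "(int \<delta> * c, d)"] assms
    by (simp add: Gamma0_bottom_rows_def Gamma0_row_class_def P)
qed

lemma Gamma0_row_class_nonempty:
  assumes "v \<in> Gamma0_bottom_rows \<delta>"
  shows "Gamma0_row_class \<delta> v \<noteq> {}"
proof -
  obtain C e where v: "v = (C, e)" and "int \<delta> dvd C" "coprime C e"
    using assms by (auto simp: Gamma0_bottom_rows_def)
  then obtain c where "C = int \<delta> * c"
    by (auto elim: dvdE)
  with \<open>coprime C e\<close> obtain u w where "u * (int \<delta> * c) + w * e = 1"
    using bezout_int[of "int \<delta> * c" e] by (auto simp: coprime_iff_gcd_eq_1)
  then have "mat2 (of_int w) (of_int (-u)) (of_int (int \<delta> * c)) (of_int e) \<in> Gamma0_row_class \<delta> v"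
    unfolding Gamma0_row_class_def Gamma0_iff v \<open>C = int \<delta> * c\<close>
    by (intro CollectI conjI exI[of _ w] exI[of _ "-u"] exI[of _ c] exI[of _ e]) (auto simp: algebra_simps)
  then show ?thesis by blast
qed

lemma Trel_class_eq_Gamma0_row_class:
  assumes "P0 \<in> Gamma0_row_class \<delta> v"
  shows "Trel \<delta> `` {P0} = Gamma0_row_class \<delta> v"
proof (intro set_eqI iffI)
  fix P assume "P \<in> Trel \<delta> `` {P0}"
  then show "P \<in> Gamma0_row_class \<delta> v"
    using assms by (auto simp: Trel_def Gamma0_row_class_def Tpow_mult)
next
  fix P assume P: "P \<in> Gamma0_row_class \<delta> v"
  obtain a b c d where Pd: "P = mat2 (of_int a) (of_int b) (of_int (int \<delta> * c)) (of_int d)"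
    and det: "a * d - b * (int \<delta> * c) = 1"
    using P Gamma0_iff Gamma0_row_class_def by blast
  obtain a' b' c' d' where P0d: "P0 = mat2 (of_int a') (of_int b') (of_int (int \<delta> * c')) (of_int d')"
    and det': "a' * d' - b' * (int \<delta> * c') = 1"
    using assms Gamma0_iff Gamma0_row_class_def by blast
  have "rat_of_int (int \<delta> * c') = of_int (int \<delta> * c)" "rat_of_int d' = of_int d"
    using P assms by (simp_all add: Gamma0_row_class_def Pd P0d del: of_int_mult)
  then have c': "int \<delta> * c' = int \<delta> * c" and d': "d' = d"
    by (simp_all only: of_int_eq_iff)
  define m where "m = a * b' - a' * b"
  have "a' = a + m * (int \<delta> * c)" "b' = b + m * d"
    using SL2_same_bottom_row[OF det, of a' b'] det' unfolding c' d' m_def by simp_all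
  then have "P0 = Tpow m ** P"
    by (simp add: Tpow_mult Pd P0d c' d' mat2_eq_iff)
  then show "P \<in> Trel \<delta> `` {P0}"
    using P assms by (auto simp: Trel_def Gamma0_row_class_def)
qed

lemma bij_betw_Gamma0_row_class:
  "bij_betw (Gamma0_row_class \<delta>) (Gamma0_bottom_rows \<delta>) (Gamma0_mod_T \<delta>)"
proof (rule bij_betw_imageI)
  show "inj_on (Gamma0_row_class \<delta>) (Gamma0_bottom_rows \<delta>)"
  proof (rule inj_onI)
    fix v w assume "v \<in> Gamma0_bottom_rows \<delta>" "Gamma0_row_class \<delta> v = Gamma0_row_class \<delta> w"
    then obtain P where "P \<in> Gamma0_row_class \<delta> v" "P \<in> Gamma0_row_class \<delta> w"
      using Gamma0_row_class_nonempty by blast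
    then show "v = w"
      by (simp add: Gamma0_row_class_def prod_eq_iff)
  qed
  show "Gamma0_row_class \<delta> ` Gamma0_bottom_rows \<delta> = Gamma0_mod_T \<delta>"
  proof (intro equalityI image_subsetI subsetI)
    fix v assume "v \<in> Gamma0_bottom_rows \<delta>"
    then obtain P where P: "P \<in> Gamma0_row_class \<delta> v"
      using Gamma0_row_class_nonempty by blast
    then have "P \<in> Gamma0 \<delta>"
      by (simp add: Gamma0_row_class_def)
    then show "Gamma0_row_class \<delta> v \<in> Gamma0_mod_T \<delta>"
      unfolding Gamma0_mod_T_def Trel_class_eq_Gamma0_row_class[OF P, symmetric] by (rule quotientI)
  next
    fix X assume "X \<in> Gamma0_mod_T \<delta>"
    then obtain P where "P \<in> Gamma0 \<delta>" "X = Trel \<delta> `` {P}"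
      unfolding Gamma0_mod_T_def by (auto elim: quotientE)
    then show "X \<in> Gamma0_row_class \<delta> ` Gamma0_bottom_rows \<delta>"
      by (metis Gamma0_row_classE Trel_class_eq_Gamma0_row_class image_eqI)
  qed
qed

lemma infsum_Gamma0_mod_T:
  fixes f :: "rat^2^2 \<Rightarrow> 'b :: {comm_monoid_add, t2_space}"
  shows "(\<Sum>\<^sub>\<infinity>X\<in>Gamma0_mod_T \<delta>. f (mat2 0 j 0 q ** (SOME P. P \<in> X)))
       = (\<Sum>\<^sub>\<infinity>(C, e)\<in>Gamma0_bottom_rows \<delta>. f (mat2 (j * of_int C) (j * of_int e) (q * of_int C) (q * of_int e)))"
proof -
  have "(\<Sum>\<^sub>\<infinity>X\<in>Gamma0_mod_T \<delta>. f (mat2 0 j 0 q ** (SOME P. P \<in> X)))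
      = (\<Sum>\<^sub>\<infinity>v\<in>Gamma0_bottom_rows \<delta>. f (mat2 0 j 0 q ** (SOME P. P \<in> Gamma0_row_class \<delta> v)))"
    by (rule infsum_reindex_bij_betw[OF bij_betw_Gamma0_row_class, symmetric])
  also have "\<dots> = (\<Sum>\<^sub>\<infinity>(C, e)\<in>Gamma0_bottom_rows \<delta>.
                    f (mat2 (j * of_int C) (j * of_int e) (q * of_int C) (q * of_int e)))"
  proof (rule infsum_cong)
    fix v assume "v \<in> Gamma0_bottom_rows \<delta>"
    then have "(SOME P. P \<in> Gamma0_row_class \<delta> v) \<in> Gamma0_row_class \<delta> v"
      using Gamma0_row_class_nonempty some_in_eq by blast
    then show "f (mat2 0 j 0 q ** (SOME P. P \<in> Gamma0_row_class \<delta> v))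
             = (case v of (C, e) \<Rightarrow> f (mat2 (j * of_int C) (j * of_int e) (q * of_int C) (q * of_int e)))"
      by (simp add: Gamma0_row_class_def mat2_mult_right split: prod.splits)
  qed
  finally show ?thesis .
qed

section \<open>Rank-one factorisation\<close>

lemma coprime_pairs_proportional:
  fixes C e C' e' :: int
  assumes "coprime C e" "coprime C' e'" "C * e' = C' * e"
  shows "(C', e') = (C, e) \<or> (C', e') = (-C, -e)"
proof -
  have "C dvd C' * e" "C' dvd C * e'" "e dvd e' * C" "e' dvd e * C'"
    using assms(3) by (metis dvd_triv_left mult.commute)+
  then have "C dvd C'" "C' dvd C" "e dvd e'" "e' dvd e"
    using assms(1,2) by (simp_all add: coprime_dvd_mult_left_iff coprime_commute)
  then have "\<bar>C'\<bar> = \<bar>C\<bar>" "\<bar>e'\<bar> = \<bar>e\<bar>"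
    using zdvd_antisym_abs by blast+
  then have "C' = C \<or> C' = -C" "e' = e \<or> e' = -e"
    by (simp_all add: abs_eq_iff)
  then show ?thesis
    using assms(3) by (elim disjE) auto
qed

lemma int_rank_one_factors_unique:
  fixes j s C e j' s' C' e' :: int
  assumes "coprime C e" "coprime C' e'" "(j, s) \<noteq> (0, 0)"
    and "j * C = j' * C'" "j * e = j' * e'" "s * C = s' * C'" "s * e = s' * e'"
  shows "(j', s', C', e') = (j, s, C, e) \<or> (j', s', C', e') = (-j, -s, -C, -e)"
proof -
  have "j * (C * e' - C' * e) = (j * C) * e' - (j * e) * C'"
    "s * (C * e' - C' * e) = (s * C) * e' - (s * e) * C'"
    by (simp_all add: algebra_simps)
  then have "j * (C * e' - C' * e) = 0" "s * (C * e' - C' * e) = 0"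
    using assms(4-7) by simp_all
  then have "C * e' = C' * e"
    using assms(3) by auto
  then have "(C', e') = (C, e) \<or> (C', e') = (-C, -e)"
    using coprime_pairs_proportional assms(1,2) by blast
  moreover have cancel: "a = b" if "a * C = b * C" "a * e = b * e" for a b :: int
    using that assms(1) by auto
  ultimately show ?thesis
  proof (elim disjE)
    assume *: "(C', e') = (C, e)"
    then have "C' = C" "e' = e"
      by simp_all
    then have "j' = j" "s' = s"
      using assms(4-7) by (auto intro: cancel)
    with * show ?thesis by simp
  next
    assume *: "(C', e') = (-C, -e)"
    then have "C' = -C" "e' = -e"
      by simp_all
    then have "j' = -j" "s' = -s"
      using assms(4-7) by (auto intro: cancel)
    with * show ?thesis by simp
  qed
qed

lemma int_proportional_rows:
  fixes x1 y1 x2 y2 :: int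
  assumes "x1 * y2 = y1 * x2" "(x2, y2) \<noteq> (0, 0)"
  obtains j where "x1 = j * (x2 div gcd x2 y2)" "y1 = j * (y2 div gcd x2 y2)"
proof -
  define C where "C = x2 div gcd x2 y2"
  define e where "e = y2 div gcd x2 y2"
  have "gcd x2 y2 \<noteq> 0" "x2 = gcd x2 y2 * C" "y2 = gcd x2 y2 * e"
    using assms(2) by (simp_all add: C_def e_def)
  then have cross: "x1 * e = y1 * C"
    using assms(1) by (metis mult.left_commute mult_cancel_left)
  have "coprime C e"
    unfolding C_def e_def using assms(2) by (intro div_gcd_coprime) auto
  then obtain u v where uv: "u * C + v * e = 1"
    using bezout_int[of C e] by (auto simp: coprime_iff_gcd_eq_1)
  have "x1 = (u * x1 + v * y1) * C" "y1 = (u * x1 + v * y1) * e"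
    using uv cross by algebra+
  then show thesis
    using that unfolding C_def e_def by blast
qed

lemma int_rank_one_factorization:
  fixes x1 y1 x2 y2 :: int
  assumes "x1 * y2 = y1 * x2" "(x1, y1, x2, y2) \<noteq> (0, 0, 0, 0)"
  obtains j s C e where "coprime C e" "(j, s) \<noteq> (0, 0)"
    "x1 = j * C" "y1 = j * e" "x2 = s * C" "y2 = s * e"
proof (cases "(x2, y2) = (0, 0)")
  case False
  define g where "g = gcd x2 y2"
  obtain j where "x1 = j * (x2 div g)" "y1 = j * (y2 div g)"
    using int_proportional_rows[OF assms(1) False] unfolding g_def by blast
  moreover have "coprime (x2 div g) (y2 div g)" "x2 = g * (x2 div g)" "y2 = g * (y2 div g)" "g \<noteq> 0"
    using False unfolding g_def by (auto intro: div_gcd_coprime)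
  ultimately show thesis
    using that by blast
next
  case True
  define g where "g = gcd x1 y1"
  have "(x1, y1) \<noteq> (0, 0)"
    using True assms(2) by auto
  then have "coprime (x1 div g) (y1 div g)" "x1 = g * (x1 div g)" "y1 = g * (y1 div g)" "g \<noteq> 0"
    unfolding g_def by (auto intro: div_gcd_coprime)
  then show thesis
    using that[of "x1 div g" "y1 div g" g 0] True by auto
qed

definition singular_set :: "nat \<Rightarrow> (rat^2^2) set" where
  "singular_set \<delta> = {A \<in> Mdelta \<delta>. A \<noteq> 0 \<and> det A = 0 \<and>
                      (\<forall>p\<in>prime_factors \<delta>. \<not> int p dvd \<lfloor>of_nat \<delta> * A $ 2 $ 2\<rfloor>)}"

text \<open>The column \<open>(j, s/\<delta>)\<close> times the row \<open>(C, e)\<close>; for \<open>s = d p\<close> this is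
  \<open>mat2 0 j 0 (d/\<delta> * p)\<close> times any matrix of \<open>\<Gamma>\<^sub>0(\<delta>)\<close> with bottom row \<open>(C, e)\<close>.\<close>
definition rank_one :: "nat \<Rightarrow> int \<Rightarrow> int \<Rightarrow> int \<Rightarrow> int \<Rightarrow> rat^2^2" where
  "rank_one \<delta> j s C e =
     mat2 (of_int (j * C)) (of_int (j * e)) (of_int (s * C) / of_nat \<delta>) (of_int (s * e) / of_nat \<delta>)"

lemma rank_one_eq_iff:
  assumes "\<delta> > 0"
  shows "rank_one \<delta> j s C e = rank_one \<delta> j' s' C' e' \<longleftrightarrow>
           j * C = j' * C' \<and> j * e = j' * e' \<and> s * C = s' * C' \<and> s * e = s' * e'"
  using assms unfolding rank_one_def mat2_eq_iff
  by (simp add: divide_cancel_right del: of_int_mult)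

lemma rank_one_eq_rank_one_iff:
  assumes "\<delta> > 0" "(j, s) \<noteq> (0, 0)"
    and "(C, e) \<in> Gamma0_bottom_rows \<delta>" "(C', e') \<in> Gamma0_bottom_rows \<delta>"
  shows "rank_one \<delta> j' s' C' e' = rank_one \<delta> j s C e \<longleftrightarrow>
           (j', s', C', e') = (j, s, C, e) \<or> (j', s', C', e') = (-j, -s, -C, -e)"
proof
  assume "rank_one \<delta> j' s' C' e' = rank_one \<delta> j s C e"
  then show "(j', s', C', e') = (j, s, C, e) \<or> (j', s', C', e') = (-j, -s, -C, -e)"
    using assms by (intro int_rank_one_factors_unique)
      (auto simp: rank_one_eq_iff Gamma0_bottom_rows_def)
qed (use assms(1) in \<open>auto simp: rank_one_eq_iff\<close>)

lemma coprime_if_no_prime_factor_dvd: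
  fixes k :: int
  assumes "\<delta> > 0" "\<forall>p\<in>prime_factors \<delta>. \<not> int p dvd k"
  shows "coprime k (int \<delta>)"
proof (rule coprimeI)
  fix c assume c: "c dvd k" "c dvd int \<delta>"
  show "is_unit c"
  proof (rule ccontr)
    assume "\<not> is_unit c"
    then obtain q where q: "prime q" "q dvd c"
      using prime_factor_int[of c] by force
    then have "int (nat q) = q"
      by (simp add: prime_ge_0_int)
    have "q dvd k" "q dvd int \<delta>"
      using q(2) c by (auto intro: dvd_trans)
    then have "nat q dvd \<delta>"
      using \<open>int (nat q) = q\<close> by (metis int_dvd_int_iff)
    then have "nat q \<in> prime_factors \<delta>"
      using q(1) assms(1) by (simp add: in_prime_factors_iff)
    then show False
      using assms(2) \<open>q dvd k\<close> \<open>int (nat q) = q\<close> by auto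
  qed
qed

lemma Gamma0_bottom_row_prime_dvd_iff:
  assumes "(C, e) \<in> Gamma0_bottom_rows \<delta>" "p \<in> prime_factors \<delta>"
  shows "int p dvd s * e \<longleftrightarrow> int p dvd s"
proof -
  have "prime (int p)" "int p dvd C"
    using assms by (auto simp: Gamma0_bottom_rows_def in_prime_factors_iff intro: dvd_trans)
  moreover have "coprime C e"
    using assms(1) by (simp add: Gamma0_bottom_rows_def)
  ultimately have "\<not> int p dvd e"
    by (metis coprime_common_divisor not_prime_unit)
  with \<open>prime (int p)\<close> show ?thesis
    by (auto simp: prime_dvd_mult_iff)
qed

lemma rank_one_in_singular_set_iff:
  assumes "\<delta> > 0" "(j, s) \<noteq> (0, 0)" "(C, e) \<in> Gamma0_bottom_rows \<delta>"
  shows "rank_one \<delta> j s C e \<in> singular_set \<delta> \<longleftrightarrow> (\<forall>p\<in>prime_factors \<delta>. \<not> int p dvd s)"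
proof -
  obtain c where C: "C = int \<delta> * c"
    using assms(3) by (auto simp: Gamma0_bottom_rows_def elim: dvdE)
  have "rank_one \<delta> j s C e = mat2 (of_int (j * C)) (of_int (j * e)) (of_int (s * c)) (of_int (s * e) / of_nat \<delta>)"
    using assms(1) by (simp add: rank_one_def C)
  then have "rank_one \<delta> j s C e \<in> Mdelta \<delta>"
    unfolding Mdelta_def by blast
  moreover have "rank_one \<delta> j s C e \<noteq> 0"
    using assms(1,2,3) by (auto simp: rank_one_def mat2_eq_0_iff Gamma0_bottom_rows_def)
  moreover have "det (rank_one \<delta> j s C e) = 0"
    by (simp add: rank_one_def det_mat2)
  moreover have "\<lfloor>of_nat \<delta> * rank_one \<delta> j s C e $ 2 $ 2\<rfloor> = s * e"
    using assms(1) by (simp add: rank_one_def del: of_int_mult)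
  ultimately show ?thesis
    unfolding singular_set_def using Gamma0_bottom_row_prime_dvd_iff[OF assms(3)] by auto
qed

lemma singular_set_rank_one:
  assumes "\<delta> > 0" "A \<in> singular_set \<delta>"
  obtains j s C e where "(j, s) \<noteq> (0, 0)" "(C, e) \<in> Gamma0_bottom_rows \<delta>" "A = rank_one \<delta> j s C e"
proof -
  obtain n1 l1 n2 l2 where A: "A = mat2 (of_int n1) (of_int l1) (of_int n2) (of_int l2 / of_nat \<delta>)"
    using assms(2) unfolding singular_set_def Mdelta_def by blast
  have \<delta>: "(of_nat \<delta> :: rat) \<noteq> 0"
    using assms(1) by simp
  have "det A = 0" "A \<noteq> 0" "\<forall>p\<in>prime_factors \<delta>. \<not> int p dvd \<lfloor>of_nat \<delta> * A $ 2 $ 2\<rfloor>"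
    using assms(2) by (simp_all add: singular_set_def)
  moreover have "\<lfloor>of_nat \<delta> * A $ 2 $ 2\<rfloor> = l2"
    using \<delta> by (simp add: A)
  ultimately have "of_int n1 * (of_int l2 / of_nat \<delta>) - of_int l1 * (of_int n2 :: rat) = 0"
    and nz: "(n1, l1, int \<delta> * n2, l2) \<noteq> (0, 0, 0, 0)"
    and cop: "coprime l2 (int \<delta>)"
    using assms(1) coprime_if_no_prime_factor_dvd by (auto simp: A det_mat2 mat2_eq_0_iff)
  then have "rat_of_int (n1 * l2) = of_int (l1 * (int \<delta> * n2))"
    using \<delta> by (simp add: field_simps)
  then have det: "n1 * l2 = l1 * (int \<delta> * n2)"
    by (simp only: of_int_eq_iff)
  obtain j s C e where fac: "coprime C e" "(j, s) \<noteq> (0, 0)"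
    "n1 = j * C" "l1 = j * e" "int \<delta> * n2 = s * C" "l2 = s * e"
    using int_rank_one_factorization[OF det nz] .
  have "of_int (s * C) / of_nat \<delta> = (of_int n2 :: rat)"
    using \<delta> by (simp flip: fac(5))
  then have "A = rank_one \<delta> j s C e"
    unfolding A rank_one_def mat2_eq_iff by (simp add: fac(3,4,6))
  moreover have "coprime s (int \<delta>)"
    using cop fac(6) by simp
  then have "int \<delta> dvd C"
    using fac(5) by (metis coprime_commute coprime_dvd_mult_right_iff dvd_triv_left)
  ultimately show thesis
    using that fac(1,2) by (simp add: Gamma0_bottom_rows_def)
qed

section \<open>Inclusion-exclusion over squarefree divisors\<close>

lemma prod_primes_dvd_iff:
  fixes s :: int
  assumes "finite S" "\<forall>p\<in>S. prime p"
  shows "int (\<Prod>S) dvd s \<longleftrightarrow> (\<forall>p\<in>S. int p dvd s)"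
  using assms
proof (induction S rule: finite_induct)
  case (insert p S)
  have "coprime p (\<Prod>S)"
    using insert by (intro prod_coprime_right primes_coprime) auto
  then have "coprime (int p) (int (\<Prod>S))"
    by (simp only: coprime_int_iff)
  then have "int p * int (\<Prod>S) dvd s \<longleftrightarrow> int p dvd s \<and> int (\<Prod>S) dvd s"
    by (auto intro: divides_mult dvd_mult_left dvd_mult_right)
  with insert show ?case
    by simp
qed simp

lemma prime_factors_prod_primes:
  assumes "finite S" "\<forall>p\<in>S. prime p"
  shows "prime_factors (\<Prod>S) = S"
proof -
  have "0 \<notin> (\<lambda>p. p) ` S"
    using assms(2) by auto
  then show ?thesis
    using assms by (simp add: prime_factors_prod prime_prime_factors)
qed

lemma Cl_eq_image: "Cl l \<delta> = (\<lambda>S. \<Prod>S) ` {S \<in> Pow (prime_factors \<delta>). card S = l}"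
  unfolding Cl_def by blast

lemma inj_on_prod_prime_factors: "inj_on (\<lambda>S. \<Prod>S) (Pow (prime_factors \<delta>))"
proof (rule inj_onI)
  fix S T assume "S \<in> Pow (prime_factors \<delta>)" "T \<in> Pow (prime_factors \<delta>)" "\<Prod>S = \<Prod>T"
  moreover have "finite S" "finite T" "\<forall>p\<in>S. prime p" "\<forall>p\<in>T. prime p"
    using calculation by (auto intro: finite_subset)
  ultimately show "S = T"
    using prime_factors_prod_primes by metis
qed

lemma Cl_pos: "d \<in> Cl l \<delta> \<Longrightarrow> d > 0"
  unfolding Cl_def by (auto intro!: prod_pos intro: prime_gt_0_nat)

lemma sum_Pow_alternating_prod:
  fixes x :: "'a \<Rightarrow> 'b :: comm_ring_1"
  assumes "finite P"
  shows "(\<Sum>S\<in>Pow P. (-1) ^ card S * (\<Prod>p\<in>S. x p)) = (\<Prod>p\<in>P. 1 - x p)"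
  using prod_add[OF assms, of "\<lambda>p. - x p" "\<lambda>_. 1"] by (simp add: prod_uminus)

lemma prod_of_bool:
  assumes "finite S"
  shows "(\<Prod>x\<in>S. of_bool (Q x)) = (of_bool (\<forall>x\<in>S. Q x) :: 'a :: comm_semiring_1)"
proof (cases "\<forall>x\<in>S. Q x")
  case False
  then have "(\<Prod>x\<in>S. of_bool (Q x) :: 'a) = 0"
    by (intro prod_zero assms) auto
  with False show ?thesis
    by simp
qed simp

lemma sum_Cl_of_bool_dvd:
  fixes s :: int
  shows "(\<Sum>d\<in>Cl l \<delta>. of_bool (int d dvd s))
       = (\<Sum>S\<in>{S \<in> Pow (prime_factors \<delta>). card S = l}. \<Prod>p\<in>S. of_bool (int p dvd s) :: 'a :: comm_semiring_1)"
proof -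
  have "(\<Sum>d\<in>Cl l \<delta>. of_bool (int d dvd s))
      = (\<Sum>S\<in>{S \<in> Pow (prime_factors \<delta>). card S = l}. of_bool (int (\<Prod>S) dvd s) :: 'a)"
    unfolding Cl_eq_image
    by (rule sum.reindex_cong[OF inj_on_subset[OF inj_on_prod_prime_factors]]) auto
  also have "\<dots> = (\<Sum>S\<in>{S \<in> Pow (prime_factors \<delta>). card S = l}. \<Prod>p\<in>S. of_bool (int p dvd s))"
  proof (intro sum.cong refl)
    fix S assume "S \<in> {S \<in> Pow (prime_factors \<delta>). card S = l}"
    then have "finite S" "\<forall>p\<in>S. prime p"
      by (auto intro: finite_subset)
    then show "of_bool (int (\<Prod>S) dvd s) = (\<Prod>p\<in>S. of_bool (int p dvd s) :: 'a)"
      by (simp only: prod_primes_dvd_iff prod_of_bool)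
  qed
  finally show ?thesis .
qed

lemma alternating_sum_Cl_dvd:
  fixes s :: int
  shows "(\<Sum>l\<in>{0..card (prime_factors \<delta>)}. (-1) ^ l * (\<Sum>d\<in>Cl l \<delta>. of_bool (int d dvd s)))
       = (of_bool (\<forall>p\<in>prime_factors \<delta>. \<not> int p dvd s) :: 'a :: comm_ring_1)"
proof -
  define P where "P = prime_factors \<delta>"
  have "(\<Sum>l\<in>{0..card P}. (-1) ^ l * (\<Sum>d\<in>Cl l \<delta>. of_bool (int d dvd s)))
      = (\<Sum>l\<in>{0..card P}. \<Sum>S\<in>{S \<in> Pow P. card S = l}. (-1) ^ card S * (\<Prod>p\<in>S. of_bool (int p dvd s)) :: 'a)"
    by (simp add: sum_Cl_of_bool_dvd P_def sum_distrib_left)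
  also have "\<dots> = (\<Sum>S\<in>Pow P. (-1) ^ card S * (\<Prod>p\<in>S. of_bool (int p dvd s)))"
    by (rule sum.group) (auto simp: P_def card_mono)
  also have "\<dots> = (\<Prod>p\<in>P. 1 - of_bool (int p dvd s))"
    by (simp add: P_def sum_Pow_alternating_prod)
  also have "\<dots> = (\<Prod>p\<in>P. of_bool (\<not> int p dvd s))"
    by (intro prod.cong) auto
  also have "\<dots> = of_bool (\<forall>p\<in>P. \<not> int p dvd s)"
    by (simp add: P_def prod_of_bool)
  finally show ?thesis
    unfolding P_def .
qed

section \<open>Counting factorisations\<close>

definition rank_one_reps :: "nat \<Rightarrow> nat \<Rightarrow> rat^2^2 \<Rightarrow> ((int \<times> int) \<times> int \<times> int) set" where
  "rank_one_reps \<delta> d A = {y \<in> (UNIV - {(0, 0)}) \<times> Gamma0_bottom_rows \<delta>.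
                            (case y of ((j, p), C, e) \<Rightarrow> rank_one \<delta> j (int d * p) C e) = A}"

lemma rank_one_reps_rank_one:
  assumes "\<delta> > 0" "d > 0" "(j, s) \<noteq> (0, 0)" "(C, e) \<in> Gamma0_bottom_rows \<delta>"
  shows "rank_one_reps \<delta> d (rank_one \<delta> j s C e) =
           (if int d dvd s then {((j, s div int d), C, e), ((-j, -(s div int d)), -C, -e)} else {})"
proof (rule set_eqI)
  fix y :: "(int \<times> int) \<times> int \<times> int"
  obtain j' p' C' e' where y: "y = ((j', p'), C', e')"
    by (metis prod.collapse)
  have "y \<in> rank_one_reps \<delta> d (rank_one \<delta> j s C e) \<longleftrightarrow>
          (C', e') \<in> Gamma0_bottom_rows \<delta> \<and>
          ((j', int d * p', C', e') = (j, s, C, e) \<or> (j', int d * p', C', e') = (-j, -s, -C, -e))"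
    using assms rank_one_eq_rank_one_iff[OF assms(1,3,4)]
    by (auto simp: rank_one_reps_def y)
  also have "\<dots> \<longleftrightarrow> y \<in> (if int d dvd s then {((j, s div int d), C, e), ((-j, -(s div int d)), -C, -e)} else {})"
  proof -
    have div: "int d * q = s \<longleftrightarrow> int d dvd s \<and> q = s div int d" for q
      using assms(2) by auto
    have "int d * p' = -s \<longleftrightarrow> int d * (-p') = s"
      by linarith
    also have "\<dots> \<longleftrightarrow> int d dvd s \<and> p' = -(s div int d)"
      unfolding div by auto
    finally have "int d * p' = -s \<longleftrightarrow> int d dvd s \<and> p' = -(s div int d)" .
    moreover note div[of p']
    moreover have "(C, e) \<noteq> (-C, -e)"
      using assms(4) by (auto simp: Gamma0_bottom_rows_def)
    ultimately show ?thesis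
      using assms(4) Gamma0_bottom_rows_uminus[OF assms(4)] by (auto simp: y)
  qed
  finally show "y \<in> rank_one_reps \<delta> d (rank_one \<delta> j s C e) \<longleftrightarrow> \<dots>" .
qed

lemma rank_one_reps_not_rank_one:
  assumes "d > 0"
    and "\<And>j s C e. (j, s) \<noteq> (0, 0) \<Longrightarrow> (C, e) \<in> Gamma0_bottom_rows \<delta> \<Longrightarrow> A \<noteq> rank_one \<delta> j s C e"
  shows "rank_one_reps \<delta> d A = {}"
proof -
  have False if "((j, p), C, e) \<in> rank_one_reps \<delta> d A" for j p C e
  proof -
    have "(j, int d * p) \<noteq> (0, 0)" "(C, e) \<in> Gamma0_bottom_rows \<delta>" "A = rank_one \<delta> j (int d * p) C e"
      using that assms(1) by (auto simp: rank_one_reps_def)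
    then show False
      using assms(2) by blast
  qed
  then show ?thesis
    by fast
qed

lemma finite_rank_one_reps:
  assumes "\<delta> > 0" "d > 0"
  shows "finite (rank_one_reps \<delta> d A)"
proof (cases "\<exists>j s C e. (j, s) \<noteq> (0, 0) \<and> (C, e) \<in> Gamma0_bottom_rows \<delta> \<and> A = rank_one \<delta> j s C e")
  case True
  then obtain j s C e where "(j, s) \<noteq> (0, 0)" "(C, e) \<in> Gamma0_bottom_rows \<delta>" "A = rank_one \<delta> j s C e"
    by blast
  then show ?thesis
    by (simp add: rank_one_reps_rank_one[OF assms])
next
  case False
  then have "rank_one_reps \<delta> d A = {}"
    by (intro rank_one_reps_not_rank_one[OF assms(2)]) auto
  then show ?thesis
    by simp
qed

lemma alternating_sum_card_rank_one_reps:
  assumes "\<delta> > 0"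
  shows "(\<Sum>l\<in>{0..card (prime_factors \<delta>)}. (-1) ^ l * (\<Sum>d\<in>Cl l \<delta>. of_nat (card (rank_one_reps \<delta> d A))))
       = 2 * (of_bool (A \<in> singular_set \<delta>) :: 'a :: comm_ring_1)"
proof (cases "\<exists>j s C e. (j, s) \<noteq> (0, 0) \<and> (C, e) \<in> Gamma0_bottom_rows \<delta> \<and> A = rank_one \<delta> j s C e")
  case True
  then obtain j s C e where rep: "(j, s) \<noteq> (0, 0)" "(C, e) \<in> Gamma0_bottom_rows \<delta>" "A = rank_one \<delta> j s C e"
    by blast
  have "(C, e) \<noteq> (-C, -e)"
    using rep(2) by (auto simp: Gamma0_bottom_rows_def)
  then have "of_nat (card (rank_one_reps \<delta> d A)) = 2 * (of_bool (int d dvd s) :: 'a)" if "d \<in> Cl l \<delta>" for d l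
    using rank_one_reps_rank_one[OF assms Cl_pos[OF that] rep(1,2)] rep(3) by auto
  then have "(\<Sum>l\<in>{0..card (prime_factors \<delta>)}. (-1) ^ l * (\<Sum>d\<in>Cl l \<delta>. of_nat (card (rank_one_reps \<delta> d A))))
      = 2 * (\<Sum>l\<in>{0..card (prime_factors \<delta>)}. (-1) ^ l * (\<Sum>d\<in>Cl l \<delta>. of_bool (int d dvd s)) :: 'a)"
    by (simp add: sum_distrib_left mult.left_commute)
  also have "\<dots> = 2 * of_bool (A \<in> singular_set \<delta>)"
    unfolding alternating_sum_Cl_dvd rep(3) rank_one_in_singular_set_iff[OF assms rep(1,2)] ..
  finally show ?thesis .
next
  case False
  then have "rank_one_reps \<delta> d A = {}" if "d \<in> Cl l \<delta>" for d l
    by (intro rank_one_reps_not_rank_one[OF Cl_pos[OF that]]) auto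
  moreover have "A \<notin> singular_set \<delta>"
  proof
    assume "A \<in> singular_set \<delta>"
    then obtain j s C e where "(j, s) \<noteq> (0, 0)" "(C, e) \<in> Gamma0_bottom_rows \<delta>" "A = rank_one \<delta> j s C e"
      by (rule singular_set_rank_one[OF assms])
    with False show False
      by blast
  qed
  ultimately show ?thesis
    by simp
qed

lemma has_sum_comp_finite_fibres:
  fixes f :: "'a \<Rightarrow> 'c :: {comm_semiring_1, topological_space}"
  assumes "finite S" "\<And>A. A \<notin> S \<Longrightarrow> f A = 0" "\<And>A. A \<in> S \<Longrightarrow> finite {y \<in> I. h y = A}"
  shows "((\<lambda>y. f (h y)) has_sum (\<Sum>A\<in>S. f A * of_nat (card {y \<in> I. h y = A}))) I"
proof -
  define T where "T = {y \<in> I. h y \<in> S}"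
  have "T = (\<Union>A\<in>S. {y \<in> I. h y = A})"
    unfolding T_def by auto
  then have "finite T"
    using assms(1,3) by auto
  have "(\<Sum>A\<in>S. f A * of_nat (card {y \<in> I. h y = A})) = (\<Sum>A\<in>S. \<Sum>y\<in>{y \<in> T. h y = A}. f (h y))"
  proof (intro sum.cong refl)
    fix A assume "A \<in> S"
    then have "{y \<in> T. h y = A} = {y \<in> I. h y = A}"
      by (auto simp: T_def)
    then show "f A * of_nat (card {y \<in> I. h y = A}) = (\<Sum>y\<in>{y \<in> T. h y = A}. f (h y))"
      by (simp add: mult.commute)
  qed
  also have "\<dots> = (\<Sum>y\<in>T. f (h y))"
    by (rule sum.group) (use \<open>finite T\<close> assms(1) in \<open>auto simp: T_def\<close>)
  finally have "((\<lambda>y. f (h y)) has_sum (\<Sum>A\<in>S. f A * of_nat (card {y \<in> I. h y = A}))) T"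
    using \<open>finite T\<close> by simp
  then show ?thesis
    by (rule has_sum_cong_neutral[THEN iffD1, rotated -1]) (use assms(2) in \<open>auto simp: T_def\<close>)
qed

lemma infsum_infsum_Gamma0_mod_T:
  fixes f :: "rat^2^2 \<Rightarrow> 'b :: {banach, comm_ring_1}"
  assumes "\<delta> > 0" "d > 0" "finite S" "\<And>A. A \<notin> S \<Longrightarrow> f A = 0"
  shows "(\<Sum>\<^sub>\<infinity>(j, p)\<in>(UNIV :: (int \<times> int) set) - {(0, 0)}.
            (\<Sum>\<^sub>\<infinity>X\<in>Gamma0_mod_T \<delta>.
               f (mat2 0 (of_int j) 0 (of_nat d / of_nat \<delta> * of_int p) ** (SOME P. P \<in> X))))
       = (\<Sum>A\<in>S. f A * of_nat (card (rank_one_reps \<delta> d A)))"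
proof -
  define I :: "((int \<times> int) \<times> int \<times> int) set" where "I = (UNIV - {(0, 0)}) \<times> Gamma0_bottom_rows \<delta>"
  define h where "h y = (case y of ((j, p), C, e) \<Rightarrow> rank_one \<delta> j (int d * p) C e)" for y
  have reps: "{y \<in> I. h y = A} = rank_one_reps \<delta> d A" for A
    by (simp add: rank_one_reps_def I_def h_def)
  have sum: "((\<lambda>y. f (h y)) has_sum (\<Sum>A\<in>S. f A * of_nat (card (rank_one_reps \<delta> d A)))) I"
    using has_sum_comp_finite_fibres[where f = f and S = S and I = I and h = h] assms(3,4) finite_rank_one_reps[OF assms(1,2)]
    unfolding reps by blast
  have "(\<lambda>(j, p). \<Sum>\<^sub>\<infinity>X\<in>Gamma0_mod_T \<delta>.
            f (mat2 0 (of_int j) 0 (of_nat d / of_nat \<delta> * of_int p) ** (SOME P. P \<in> X))) x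
      = (\<Sum>\<^sub>\<infinity>v\<in>Gamma0_bottom_rows \<delta>. f (h (x, v)))" for x
    unfolding infsum_Gamma0_mod_T case_prod_beta using assms(1)
    by (intro infsum_cong) (auto simp: h_def rank_one_def split: prod.splits)
  then have "(\<Sum>\<^sub>\<infinity>(j, p)\<in>UNIV - {(0, 0)}.
               (\<Sum>\<^sub>\<infinity>X\<in>Gamma0_mod_T \<delta>. f (mat2 0 (of_int j) 0 (of_nat d / of_nat \<delta> * of_int p) ** (SOME P. P \<in> X))))
      = (\<Sum>\<^sub>\<infinity>x\<in>UNIV - {(0, 0)}. \<Sum>\<^sub>\<infinity>v\<in>Gamma0_bottom_rows \<delta>. f (h (x, v)))"
    by (rule infsum_cong)
  also have "\<dots> = (\<Sum>\<^sub>\<infinity>y\<in>I. f (h y))"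
    unfolding I_def using sum by (intro infsum_Sigma_banach) (auto simp: I_def intro: has_sum_imp_summable)
  also have "\<dots> = (\<Sum>A\<in>S. f A * of_nat (card (rank_one_reps \<delta> d A)))"
    using sum by (rule infsumI)
  finally show ?thesis .
qed

theorem lemma4p6:
  fixes \<delta> :: nat and f :: "rat^2^2 \<Rightarrow> complex"
  assumes "\<delta> > 0"
    and "finite {A. f A \<noteq> 0}"
  shows "(\<Sum>\<^sub>\<infinity>A\<in>{A \<in> Mdelta \<delta>. A \<noteq> 0 \<and> det A = 0 \<and>
              (\<forall>p\<in>prime_factors \<delta>. \<not> int p dvd \<lfloor>of_nat \<delta> * A $ 2 $ 2\<rfloor>)}. f A)
       = 1/2 * (\<Sum>l\<in>{0..card (prime_factors \<delta>)}. (-1)^l *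
           (\<Sum>d\<in>Cl l \<delta>.
              (\<Sum>\<^sub>\<infinity>(j, p)\<in>(UNIV :: (int \<times> int) set) - {(0, 0)}.
                 (\<Sum>\<^sub>\<infinity>X\<in>Gamma0_mod_T \<delta>.
                    f (mat2 0 (of_int j) 0 (of_nat d / of_nat \<delta> * of_int p) ** (SOME P. P \<in> X))))))"
    (is "_ = ?rhs")
proof -
  define S where "S = {A. f A \<noteq> 0}"
  have "?rhs = 1/2 * (\<Sum>l\<in>{0..card (prime_factors \<delta>)}. (-1)^l *
                 (\<Sum>d\<in>Cl l \<delta>. \<Sum>A\<in>S. f A * of_nat (card (rank_one_reps \<delta> d A))))"
    using assms unfolding S_def
    by (intro arg_cong2[where f = "(*)"] refl sum.cong infsum_infsum_Gamma0_mod_T) (auto intro: Cl_pos)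
  also have "\<dots> = (\<Sum>A\<in>S. f A * (1/2 * (\<Sum>l\<in>{0..card (prime_factors \<delta>)}. (-1)^l *
                     (\<Sum>d\<in>Cl l \<delta>. of_nat (card (rank_one_reps \<delta> d A))))))"
    by (simp add: sum_distrib_left sum.swap[of _ S] mult_ac)
  also have "\<dots> = (\<Sum>A\<in>S. f A * of_bool (A \<in> singular_set \<delta>))"
    by (simp add: alternating_sum_card_rank_one_reps[OF assms(1)])
  also have "\<dots> = (\<Sum>\<^sub>\<infinity>A\<in>S \<inter> singular_set \<delta>. f A)"
    using assms(2) by (simp add: S_def)
  also have "\<dots> = (\<Sum>\<^sub>\<infinity>A\<in>singular_set \<delta>. f A)"
    by (rule infsum_cong_neutral) (auto simp: S_def)
  finally show ?thesis
    by (simp add: singular_set_def)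
qed

end
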